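(* Let $E$ be a real Banach space which is uniformly convex with modulus of convexity $\delta_E$. Then for all $\varepsilon,\eta$ with $0<\varepsilon/2<\eta<\varepsilon<2$, $$\frac{\delta_E(\eta)}{\eta}\le \frac{\delta_E(\varepsilon)}{\varepsilon}-2\,\frac{\varepsilon-\eta}{\varepsilon\,\eta}\,\delta_E(r(\varepsilon)),\qquad\text{where } r(\varepsilon)=\frac14\left(\frac{\varepsilon}{2}-\delta_E(\varepsilon)\right).$$
   Context: $B_r(a)=\{x\in E:\|x-a\|\le r\}$. For a closed convex set $A\subset E$ its modulus of convexity is $\delta_A(\varepsilon)=\sup\{\delta\ge 0:\ B_\delta(\frac{x_1+x_2}{2})\subset A \text{ for all } x_1,x_2\in A \text{ with } \|x_1-x_2\|=\varepsilon\}$, $\varepsilon\in[0,\operatorname{diam}A)$. The modulus of convexity of the space is $\delta_E=\delta_{B_1(0)}$, defined on $[0,2)$, and $E$ is uniformly convex if $\delta_E(\varepsilon)>0$ for all $\varepsilon\in(0,2)$. *)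

theory Defs
  imports "HOL-Analysis.Analysis"
begin

definition modulus_convexity :: "'a::real_normed_vector set \<Rightarrow> real \<Rightarrow> real" where
  "modulus_convexity A \<epsilon> = Sup {\<delta>. \<delta> \<ge> 0 \<and>
     (\<forall>x1\<in>A. \<forall>x2\<in>A. norm (x1 - x2) = \<epsilon> \<longrightarrow> cball ((1/2) *\<^sub>R (x1 + x2)) \<delta> \<subseteq> A)}"

definition modulus_space :: "'a::real_normed_vector itself \<Rightarrow> real \<Rightarrow> real" where
  "modulus_space _ \<epsilon> = modulus_convexity (cball (0::'a) 1) \<epsilon>"

definition uniformly_convex :: "'a::real_normed_vector itself \<Rightarrow> bool" where
  "uniformly_convex T \<longleftrightarrow> (\<forall>\<epsilon>. 0 < \<epsilon> \<and> \<epsilon> < 2 \<longrightarrow> modulus_space T \<epsilon> > 0)"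

end

theory Submission
  imports Defs
begin

text \<open>
  In a nontrivial normed space the modulus of convexity is the infimum of the gaps
  \<open>1 - \<parallel>(x + y)/2\<parallel>\<close> over pairs in the unit ball at distance \<open>\<epsilon>\<close>.
  Take a pair \<open>x\<^sub>1, x\<^sub>2\<close> whose gap is almost \<open>\<delta>(\<epsilon>)\<close>, let \<open>u\<close> be the unit vector
  in the direction of its midpoint \<open>m\<close>, and shrink the pair towards \<open>u\<close> by the factor
  \<open>l = \<eta>/\<epsilon>\<close>. Each \<open>x\<^sub>i\<close> is at distance at least \<open>r(\<epsilon>)\<close> from \<open>u\<close>, so the points
  \<open>l x\<^sub>i + (1 - l) u\<close> lie in the ball of radius \<open>1 - 2(1 - l) \<delta>(r(\<epsilon>))\<close>, and may be pushed
  out along \<open>u\<close> by \<open>2(1 - l) \<delta>(r(\<epsilon>))\<close>. The resulting pair has distance \<open>\<eta>\<close> and gap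
  \<open>l (1 - \<parallel>m\<parallel>) - 2(1 - l) \<delta>(r(\<epsilon>))\<close>, whence
  \<open>\<delta>(\<eta>) \<le> l \<delta>(\<epsilon>) - 2(1 - l) \<delta>(r(\<epsilon>))\<close>; dividing by \<open>\<eta>\<close> gives the claim.
  The same shrinking without the push shows that \<open>\<delta>\<close> is monotone.
\<close>

lemma obtain_unit_direction:
  fixes m :: "'a::real_normed_vector"
  assumes "\<exists>x::'a. x \<noteq> 0"
  obtains u where "norm u = 1" "m = norm m *\<^sub>R u"
proof (cases "m = 0")
  case True
  obtain x :: 'a where "x \<noteq> 0" using assms by blast
  with True show ?thesis using that[of "sgn x"] by (simp add: norm_sgn)
next
  case False
  then show ?thesis using that[of "sgn m"] by (simp add: norm_sgn sgn_div_norm)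
qed

lemma cball_subset_cball_zero_iff:
  fixes c :: "'a::real_normed_vector"
  assumes "\<exists>x::'a. x \<noteq> 0" "0 \<le> d"
  shows "cball c d \<subseteq> cball 0 R \<longleftrightarrow> norm c + d \<le> R"
proof
  obtain u :: 'a where u: "norm u = 1" "c = norm c *\<^sub>R u"
    using obtain_unit_direction[OF assms(1)] .
  assume "cball c d \<subseteq> cball 0 R"
  moreover have "c + d *\<^sub>R u \<in> cball c d"
    using u assms(2) by (simp add: dist_norm)
  moreover have "c + d *\<^sub>R u = (norm c + d) *\<^sub>R u"
    using u(2) by (metis scaleR_left_distrib)
  ultimately show "norm c + d \<le> R"
    using u assms(2) by auto
next
  assume "norm c + d \<le> R"
  show "cball c d \<subseteq> cball 0 R"
  proof
    fix z assume "z \<in> cball c d"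
    then have "norm (z - c) \<le> d"
      by (simp add: dist_norm norm_minus_commute)
    then show "z \<in> cball 0 R"
      using norm_triangle_sub[of z c] \<open>norm c + d \<le> R\<close> by simp
  qed
qed

lemma norm_midpoint_le_one:
  fixes x y :: "'a::real_normed_vector"
  assumes "norm x \<le> 1" "norm y \<le> 1"
  shows "norm (midpoint x y) \<le> 1"
  using assms norm_triangle_ineq[of x y] by (simp add: midpoint_def)

lemma midpoint_gap_nonneg:
  assumes "g \<in> {1 - norm (midpoint x y) | x y :: 'a::real_normed_vector. norm x \<le> 1 \<and> norm y \<le> 1 \<and> dist x y = e}"
  shows "0 \<le> g"
proof -
  obtain x y :: 'a where "norm x \<le> 1" "norm y \<le> 1" "g = 1 - norm (midpoint x y)"
    using assms by blast
  then show ?thesis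
    using norm_midpoint_le_one[of x y] by simp
qed

lemma bdd_below_midpoint_gaps:
  "bdd_below {1 - norm (midpoint x y) | x y :: 'a::real_normed_vector. norm x \<le> 1 \<and> norm y \<le> 1 \<and> dist x y = e}"
  using midpoint_gap_nonneg by (rule bdd_belowI)

lemma exists_pair_at_distance:
  assumes "\<exists>x::'a::real_normed_vector. x \<noteq> 0" "0 \<le> e" "e \<le> 2"
  shows "\<exists>x y::'a. norm x \<le> 1 \<and> norm y \<le> 1 \<and> dist x y = e"
proof -
  obtain u :: 'a where u: "norm u = 1"
    using obtain_unit_direction[OF assms(1)] by blast
  have "dist ((e/2) *\<^sub>R u) (- (e/2) *\<^sub>R u) = e"
    using u assms by (simp add: dist_norm flip: scaleR_add_left)
  then show ?thesis
    using u assms by (intro exI[of _ "(e/2) *\<^sub>R u"] exI[of _ "- (e/2) *\<^sub>R u"]) auto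
qed

lemma modulus_space_eq_Inf:
  assumes nt: "\<exists>x::'a::real_normed_vector. x \<noteq> 0" and "0 \<le> e" "e \<le> 2"
  shows "modulus_space TYPE('a) e =
           Inf {1 - norm (midpoint x y) | x y :: 'a. norm x \<le> 1 \<and> norm y \<le> 1 \<and> dist x y = e}"
    (is "_ = Inf ?G")
proof -
  have G_ne: "?G \<noteq> {}"
    using exists_pair_at_distance[OF assms] by blast
  note G_nonneg = midpoint_gap_nonneg[of _ e]
  have ball_iff: "cball ((1/2) *\<^sub>R (x + y)) d \<subseteq> cball 0 1 \<longleftrightarrow> d \<le> 1 - norm (midpoint x y)"
    if "0 \<le> d" for d and x y :: 'a
    using cball_subset_cball_zero_iff[OF nt that] by (auto simp: midpoint_def)
  have "(\<forall>x1\<in>cball (0::'a) 1. \<forall>x2\<in>cball 0 1. norm (x1 - x2) = e \<longrightarrow>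
           cball ((1/2) *\<^sub>R (x1 + x2)) d \<subseteq> cball 0 1) \<longleftrightarrow> (\<forall>g\<in>?G. d \<le> g)"
    if "0 \<le> d" for d
    by (auto simp: ball_iff[OF that] dist_norm) blast
  then have "modulus_space TYPE('a) e = Sup {d. 0 \<le> d \<and> (\<forall>g\<in>?G. d \<le> g)}"
    unfolding modulus_space_def modulus_convexity_def by (metis (no_types, lifting))
  also have "\<dots> = Inf ?G"
  proof (rule cSup_eq_maximum)
    have "bdd_below ?G"
      using G_nonneg by (rule bdd_belowI)
    then show "Inf ?G \<in> {d. 0 \<le> d \<and> (\<forall>g\<in>?G. d \<le> g)}"
      using G_ne G_nonneg by (auto intro: cInf_greatest cInf_lower)
    show "d \<le> Inf ?G" if "d \<in> {d. 0 \<le> d \<and> (\<forall>g\<in>?G. d \<le> g)}" for d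
      using G_ne that by (auto intro: cInf_greatest)
  qed
  finally show ?thesis .
qed

lemma modulus_space_le_gap:
  fixes x y :: "'a::real_normed_vector"
  assumes nt: "\<exists>x::'a. x \<noteq> 0" and "norm x \<le> 1" "norm y \<le> 1"
  shows "modulus_space TYPE('a) (dist x y) \<le> 1 - norm (midpoint x y)"
proof -
  have "dist x y \<le> 2"
    using norm_triangle_ineq4[of x y] assms by (simp add: dist_norm)
  then show ?thesis
    using assms by (auto simp: modulus_space_eq_Inf[OF nt] intro!: cInf_lower bdd_below_midpoint_gaps)
qed

lemma modulus_space_nonneg:
  assumes nt: "\<exists>x::'a::real_normed_vector. x \<noteq> 0" and "0 \<le> e" "e \<le> 2"
  shows "0 \<le> modulus_space TYPE('a) e"
  unfolding modulus_space_eq_Inf[OF assms]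
proof (rule cInf_greatest)
  show "{1 - norm (midpoint x y) | x y :: 'a. norm x \<le> 1 \<and> norm y \<le> 1 \<and> dist x y = e} \<noteq> {}"
    using exists_pair_at_distance[OF assms] by blast
qed (rule midpoint_gap_nonneg)

lemma modulus_space_approx:
  assumes nt: "\<exists>x::'a. x \<noteq> 0" and e: "0 \<le> e" "e \<le> 2" and "0 < \<xi>"
  obtains x y :: "'a::real_normed_vector" where "norm x \<le> 1" "norm y \<le> 1" "dist x y = e"
    "1 - norm (midpoint x y) < modulus_space TYPE('a) e + \<xi>"
proof -
  let ?G = "{1 - norm (midpoint x y) | x y :: 'a. norm x \<le> 1 \<and> norm y \<le> 1 \<and> dist x y = e}"
  have "?G \<noteq> {}"
    using exists_pair_at_distance[OF nt e] by blast
  moreover note bdd_below_midpoint_gaps[of e]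
  moreover have "Inf ?G < modulus_space TYPE('a) e + \<xi>"
    using \<open>0 < \<xi>\<close> by (simp add: modulus_space_eq_Inf[OF nt e])
  ultimately have "\<exists>g\<in>?G. g < modulus_space TYPE('a) e + \<xi>"
    by (rule cInf_less_iff[THEN iffD1])
  then show ?thesis
    using that by blast
qed

lemma modulus_space_le_half:
  assumes nt: "\<exists>x::'a::real_normed_vector. x \<noteq> 0" and "0 \<le> e" "e \<le> 2"
  shows "modulus_space TYPE('a) e \<le> e / 2"
proof -
  obtain u :: 'a where u: "norm u = 1"
    using obtain_unit_direction[OF nt] by blast
  have "u - (1 - e) *\<^sub>R u = e *\<^sub>R u"
    by (simp add: algebra_simps)
  then have "dist u ((1 - e) *\<^sub>R u) = e"
    using u assms by (simp add: dist_norm)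
  moreover have "midpoint u ((1 - e) *\<^sub>R u) = (1 - e/2) *\<^sub>R u"
    by (simp add: midpoint_def algebra_simps flip: scaleR_add_left)
  ultimately show ?thesis
    using modulus_space_le_gap[OF nt, of u "(1 - e) *\<^sub>R u"] u assms by simp
qed

lemma modulus_space_0:
  assumes "\<exists>x::'a::real_normed_vector. x \<noteq> 0"
  shows "modulus_space TYPE('a) 0 = 0"
  using modulus_space_nonneg[OF assms, of 0] modulus_space_le_half[OF assms, of 0] by simp

lemma modulus_space_le_shifted_gap:
  fixes x1 x2 u :: "'a::real_normed_vector"
  assumes nt: "\<exists>x::'a. x \<noteq> 0" and u: "norm u = 1"
    and m: "midpoint x1 x2 = norm (midpoint x1 x2) *\<^sub>R u"
    and l: "0 < l" "l \<le> 1" and k: "0 \<le> k"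
    and b1: "norm (l *\<^sub>R x1 + (1 - l) *\<^sub>R u) \<le> 1 - k"
    and b2: "norm (l *\<^sub>R x2 + (1 - l) *\<^sub>R u) \<le> 1 - k"
  shows "modulus_space TYPE('a) (l * dist x1 x2) \<le> l * (1 - norm (midpoint x1 x2)) - k"
proof -
  define c where "c = 1 - l + k"
  define y1 where "y1 = l *\<^sub>R x1 + c *\<^sub>R u"
  define y2 where "y2 = l *\<^sub>R x2 + c *\<^sub>R u"
  have "norm (l *\<^sub>R x + c *\<^sub>R u) \<le> 1" if "norm (l *\<^sub>R x + (1 - l) *\<^sub>R u) \<le> 1 - k" for x
  proof -
    have "l *\<^sub>R x + c *\<^sub>R u = (l *\<^sub>R x + (1 - l) *\<^sub>R u) + k *\<^sub>R u"
      by (simp add: c_def algebra_simps)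
    then have "norm (l *\<^sub>R x + c *\<^sub>R u) \<le> norm (l *\<^sub>R x + (1 - l) *\<^sub>R u) + norm (k *\<^sub>R u)"
      by (simp only: norm_triangle_ineq)
    then show ?thesis
      using that u k by simp
  qed
  then have y: "norm y1 \<le> 1" "norm y2 \<le> 1"
    using b1 b2 by (simp_all add: y1_def y2_def)
  have "y1 - y2 = l *\<^sub>R (x1 - x2)"
    by (simp add: y1_def y2_def algebra_simps)
  then have "dist y1 y2 = l * dist x1 x2"
    using l by (simp add: dist_norm)
  moreover have "midpoint y1 y2 = l *\<^sub>R midpoint x1 x2 + c *\<^sub>R u"
    by (simp add: y1_def y2_def midpoint_def algebra_simps flip: scaleR_add_left)
  then have "midpoint y1 y2 = (l * norm (midpoint x1 x2) + c) *\<^sub>R u"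
    by (subst (asm) m) (simp add: algebra_simps)
  then have "norm (midpoint y1 y2) = l * norm (midpoint x1 x2) + c"
    using u l k by (simp add: c_def)
  ultimately show ?thesis
    using modulus_space_le_gap[OF nt y] by (simp add: c_def algebra_simps)
qed

lemma norm_convex_combination_le_modulus:
  fixes x y :: "'a::real_normed_vector"
  assumes nt: "\<exists>x::'a. x \<noteq> 0" and x: "norm x \<le> 1" and y: "norm y \<le> 1"
    and l: "1/2 \<le> l" "l \<le> 1"
  shows "norm (l *\<^sub>R x + (1 - l) *\<^sub>R y) \<le> 1 - 2 * (1 - l) * modulus_space TYPE('a) (dist x y)"
proof -
  have "l *\<^sub>R x + (1 - l) *\<^sub>R y = (2*l - 1) *\<^sub>R x + (2 - 2*l) *\<^sub>R midpoint x y"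
    by (simp add: midpoint_def algebra_simps flip: scaleR_add_left)
  then have "norm (l *\<^sub>R x + (1 - l) *\<^sub>R y) \<le> (2*l - 1) * norm x + (2 - 2*l) * norm (midpoint x y)"
    using norm_triangle_ineq[of "(2*l - 1) *\<^sub>R x" "(2 - 2*l) *\<^sub>R midpoint x y"] l by simp
  also have "\<dots> \<le> (2*l - 1) * 1 + (2 - 2*l) * (1 - modulus_space TYPE('a) (dist x y))"
    using x l modulus_space_le_gap[OF nt x y] by (intro add_mono mult_left_mono) auto
  finally show ?thesis
    by (simp add: algebra_simps)
qed

lemma modulus_space_mono:
  assumes nt: "\<exists>x::'a::real_normed_vector. x \<noteq> 0" and r: "0 \<le> r" "r \<le> d" "d \<le> 2"
  shows "modulus_space TYPE('a) r \<le> modulus_space TYPE('a) d"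
proof (cases "r = 0")
  case True
  then show ?thesis
    using modulus_space_0[OF nt] modulus_space_nonneg[OF nt, of d] r by simp
next
  case False
  then have "0 < d"
    using r by simp
  show ?thesis
  proof (rule field_le_epsilon)
    fix \<xi> :: real assume "0 < \<xi>"
    then obtain x y :: 'a where xy: "norm x \<le> 1" "norm y \<le> 1" "dist x y = d"
      and gap: "1 - norm (midpoint x y) < modulus_space TYPE('a) d + \<xi>"
      using modulus_space_approx[OF nt _ r(3)] \<open>0 < d\<close> by auto
    obtain u :: 'a where u: "norm u = 1" "midpoint x y = norm (midpoint x y) *\<^sub>R u"
      using obtain_unit_direction[OF nt] .
    define l where "l = r / d"
    have l: "0 < l" "l \<le> 1"
      using r False \<open>0 < d\<close> by (auto simp: l_def)
    have conv: "norm (l *\<^sub>R v + (1 - l) *\<^sub>R u) \<le> 1" if "norm v \<le> 1" for v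
      using convexD[OF convex_cball, of v 0 1 u l "1 - l"] that u l by simp
    have "modulus_space TYPE('a) (l * dist x y) \<le> l * (1 - norm (midpoint x y))"
      using modulus_space_le_shifted_gap[OF nt u l order_refl] conv[OF xy(1)] conv[OF xy(2)] by simp
    moreover have "l * (1 - norm (midpoint x y)) \<le> 1 - norm (midpoint x y)"
      using l norm_midpoint_le_one[OF xy(1,2)] by (intro mult_left_le_one_le) auto
    moreover have "l * dist x y = r"
      using xy \<open>0 < d\<close> by (simp add: l_def)
    ultimately show "modulus_space TYPE('a) r \<le> modulus_space TYPE('a) d + \<xi>"
      using gap by simp
  qed
qed

lemma modulus_space_scaled_le_gap:
  fixes x1 x2 :: "'a::real_normed_vector"
  assumes nt: "\<exists>x::'a. x \<noteq> 0" and x: "norm x1 \<le> 1" "norm x2 \<le> 1"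
    and l: "1/2 \<le> l" "l \<le> 1"
    and r: "0 \<le> r" "r \<le> dist x1 x2 / 2 - (1 - norm (midpoint x1 x2))"
  shows "modulus_space TYPE('a) (l * dist x1 x2)
           \<le> l * (1 - norm (midpoint x1 x2)) - 2 * (1 - l) * modulus_space TYPE('a) r"
proof -
  let ?\<delta> = "modulus_space TYPE('a)"
  define m where "m = midpoint x1 x2"
  define k where "k = 2 * (1 - l) * ?\<delta> r"
  have "dist x1 x2 \<le> 2"
    using norm_triangle_ineq4[of x1 x2] x by (simp add: dist_norm)
  then have k: "0 \<le> k"
    using l r modulus_space_nonneg[OF nt r(1)] norm_midpoint_le_one[OF x] by (simp add: k_def)
  obtain u :: 'a where u: "norm u = 1" "m = norm m *\<^sub>R u"
    using obtain_unit_direction[OF nt] .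
  have "u - m = (1 - norm m) *\<^sub>R u"
    using u(2) by (metis scaleR_diff_left scaleR_one)
  then have mu: "dist u m = 1 - norm m"
    using u norm_midpoint_le_one[OF x] by (simp add: dist_norm m_def)
  have near: "norm (l *\<^sub>R x + (1 - l) *\<^sub>R u) \<le> 1 - k"
    if "norm x \<le> 1" "dist x m = dist x1 x2 / 2" for x
  proof -
    have "r \<le> dist x u"
      using dist_triangle[of x m u] that mu r by (simp add: m_def)
    moreover have "dist x u \<le> 2"
      using norm_triangle_ineq4[of x u] that u by (simp add: dist_norm)
    ultimately have "k \<le> 2 * (1 - l) * ?\<delta> (dist x u)"
      using l modulus_space_mono[OF nt r(1)] by (simp add: k_def mult_left_mono)
    then show ?thesis
      using norm_convex_combination_le_modulus[OF nt that(1) _ l, of u] u by simp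
  qed
  have "norm (l *\<^sub>R x1 + (1 - l) *\<^sub>R u) \<le> 1 - k" "norm (l *\<^sub>R x2 + (1 - l) *\<^sub>R u) \<le> 1 - k"
    using near x by (simp_all add: m_def dist_midpoint)
  moreover have "0 < l"
    using l by simp
  ultimately show ?thesis
    using modulus_space_le_shifted_gap[OF nt u(1) u(2)[unfolded m_def] _ l(2) k] by (simp add: m_def k_def)
qed

lemma modulus_space_scaled_le:
  assumes nt: "\<exists>x::'a::real_normed_vector. x \<noteq> 0"
    and e: "0 < e" "e \<le> 2" and l: "1/2 \<le> l" "l \<le> 1"
  shows "modulus_space TYPE('a) (l * e) \<le> l * modulus_space TYPE('a) e
           - 2 * (1 - l) * modulus_space TYPE('a) ((1/4) * (e / 2 - modulus_space TYPE('a) e))"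
proof -
  let ?\<delta> = "modulus_space TYPE('a)"
  define r where "r = (1/4) * (e / 2 - ?\<delta> e)"
  have r: "0 \<le> r"
    using modulus_space_le_half[OF nt] e by (simp add: r_def)
  show ?thesis
    unfolding r_def[symmetric]
  proof (cases "r = 0")
    case True
    have "l * e \<le> e"
      using e l by (intro mult_left_le_one_le) auto
    then have "?\<delta> (l * e) \<le> l * e / 2"
      using e l by (intro modulus_space_le_half[OF nt]) (simp, linarith)
    moreover have "l * e / 2 = l * ?\<delta> e"
      using True by (simp add: r_def)
    ultimately show "?\<delta> (l * e) \<le> l * ?\<delta> e - 2 * (1 - l) * ?\<delta> r"
      using True by (simp add: modulus_space_0[OF nt])
  next
    case False
    show "?\<delta> (l * e) \<le> l * ?\<delta> e - 2 * (1 - l) * ?\<delta> r"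
    proof (rule field_le_epsilon)
      fix \<xi>' :: real assume "0 < \<xi>'"
      define \<xi> where "\<xi> = min \<xi>' (3 * r)"
      have "0 < \<xi>" "\<xi> \<le> \<xi>'" "\<xi> \<le> 3 * r"
        using \<open>0 < \<xi>'\<close> r False by (simp_all add: \<xi>_def)
      then obtain x1 x2 :: 'a where x: "norm x1 \<le> 1" "norm x2 \<le> 1" "dist x1 x2 = e"
        and gap: "1 - norm (midpoint x1 x2) < ?\<delta> e + \<xi>"
        using modulus_space_approx[OF nt _ e(2)] e by auto
      have "r \<le> dist x1 x2 / 2 - (1 - norm (midpoint x1 x2))"
        using x(3) gap \<open>\<xi> \<le> 3 * r\<close> by (simp add: r_def)
      then have "?\<delta> (l * e) \<le> l * (1 - norm (midpoint x1 x2)) - 2 * (1 - l) * ?\<delta> r"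
        using modulus_space_scaled_le_gap[OF nt x(1,2) l r] x(3) by simp
      also have "\<dots> \<le> l * (?\<delta> e + \<xi>) - 2 * (1 - l) * ?\<delta> r"
        using gap l by simp
      also have "\<dots> \<le> l * ?\<delta> e - 2 * (1 - l) * ?\<delta> r + \<xi>'"
        using mult_left_le_one_le[of \<xi> l] l \<open>0 < \<xi>\<close> \<open>\<xi> \<le> \<xi>'\<close>
        unfolding distrib_left by linarith
      finally show "?\<delta> (l * e) \<le> l * ?\<delta> e - 2 * (1 - l) * ?\<delta> r + \<xi>'" .
    qed
  qed
qed

theorem lemma1p2:
  assumes nontriv: "\<exists>x::'a::banach. x \<noteq> 0"
    and uc: "uniformly_convex TYPE('a)"
    and h1: "0 < \<epsilon> / 2" and h2: "\<epsilon> / 2 < \<eta>" and h3: "\<eta> < \<epsilon>" and h4: "\<epsilon> < 2"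
  shows "modulus_space TYPE('a) \<eta> / \<eta> \<le>
           modulus_space TYPE('a) \<epsilon> / \<epsilon>
           - 2 * ((\<epsilon> - \<eta>) / (\<epsilon> * \<eta>))
               * modulus_space TYPE('a) ((1/4) * (\<epsilon> / 2 - modulus_space TYPE('a) \<epsilon>))"
proof -
  let ?\<delta> = "modulus_space TYPE('a)"
  let ?r = "(1/4) * (\<epsilon> / 2 - ?\<delta> \<epsilon>)"
  have "?\<delta> ((\<eta> / \<epsilon>) * \<epsilon>) \<le> (\<eta> / \<epsilon>) * ?\<delta> \<epsilon> - 2 * (1 - \<eta> / \<epsilon>) * ?\<delta> ?r"
    using h1 h2 h3 h4 by (intro modulus_space_scaled_le[OF nontriv]) (auto simp: field_simps)
  then have "?\<delta> \<eta> / \<eta> \<le> ((\<eta> / \<epsilon>) * ?\<delta> \<epsilon> - 2 * (1 - \<eta> / \<epsilon>) * ?\<delta> ?r) / \<eta>"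
    using h1 h2 by (simp add: divide_right_mono)
  also have "\<dots> = ?\<delta> \<epsilon> / \<epsilon> - 2 * ((\<epsilon> - \<eta>) / (\<epsilon> * \<eta>)) * ?\<delta> ?r"
    using h1 h2 by (simp add: field_simps)
  finally show ?thesis .
qed

end
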